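(* Let $\mathbf G$ be a finite group with a subgroup sequence $\{I\}=\mathbf G_0<\mathbf G_1<\cdots<\mathbf G_m=\mathbf G$, generating sets $X_{\mathbf G_k}$ of $\mathbf G_k$, and coset leader sets $\operatorname{CL}(\mathbf G_k/\mathbf G_{k-1})$, such that the Error Control Property holds for every consecutive pair $\mathbf G_{k-1}<\mathbf G_k$ (with respect to $X_{\mathbf G_{k-1}}$, $X_{\mathbf G_k}$ and $\operatorname{CL}(\mathbf G_k/\mathbf G_{k-1})$). Let $g\in\mathbf G$ have canonical form $g=c_m\cdots c_1$ with $c_k\in\operatorname{CL}(\mathbf G_k/\mathbf G_{k-1})$. Then for any $b\in X_{\mathbf G}\cup X_{\mathbf G}^{-1}$, the canonical form $bg=c'_m\cdots c'_1$ ($c'_k\in\operatorname{CL}(\mathbf G_k/\mathbf G_{k-1})$) satisfies $c'_i=c_i$ for all but one index $i$; moreover, for that single index $j$ with $c'_j\neq c_j$, the vertex $c'_j$ is adjacent to $c_j$ in the coset leader graph for $\mathbf G_j$ over $\mathbf G_{j-1}$.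
   Context: $\operatorname{CL}(\mathbf G_k/\mathbf G_{k-1})$ is a set of representatives of the left cosets of $\mathbf G_{k-1}$ in $\mathbf G_k$ containing $I$; every $g\in\mathbf G$ is uniquely $c_m\cdots c_1$ with $c_k\in\operatorname{CL}(\mathbf G_k/\mathbf G_{k-1})$ (canonical form). For a set $X$, $X^{-1}=\{a^{-1}:a\in X\}$. Error Control Property for subgroups $H<K$, coset leaders $\operatorname{CL}(K/H)$ and generating sets $X_H$, $X_K$: for all $b\in X_K\cup X_K^{-1}$ and $c\in\operatorname{CL}(K/H)$, either $bc\in\operatorname{CL}(K/H)$ or $c^{-1}bc\in X_H\cup X_H^{-1}$. The coset leader graph for $K$ over $H$ (with respect to $X_K$) has vertex set $\operatorname{CL}(K/H)$ and a directed edge labelled $a$ from $c$ to $d$ whenever $c=ad$ with $a\in X_K$; two vertices are adjacent if joined by an edge in either direction. *)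

theory Defs
  imports "HOL-Algebra.Algebra"
begin

definition coset_leaders :: "('a, 'b) monoid_scheme \<Rightarrow> 'a set \<Rightarrow> 'a set \<Rightarrow> 'a set \<Rightarrow> bool" where
  "coset_leaders G K H C \<longleftrightarrow> C \<subseteq> K \<and> \<one>\<^bsub>G\<^esub> \<in> C \<and>
     (\<forall>x\<in>K. \<exists>!c. c \<in> C \<and> x \<in> c <#\<^bsub>G\<^esub> H)"

definition error_control :: "('a, 'b) monoid_scheme \<Rightarrow> 'a set \<Rightarrow> 'a set \<Rightarrow> 'a set \<Rightarrow> bool" where
  "error_control G XH XK C \<longleftrightarrow>
     (\<forall>b \<in> XK \<union> (\<lambda>a. inv\<^bsub>G\<^esub> a) ` XK. \<forall>c\<in>C.
        b \<otimes>\<^bsub>G\<^esub> c \<in> C \<or>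
        inv\<^bsub>G\<^esub> c \<otimes>\<^bsub>G\<^esub> b \<otimes>\<^bsub>G\<^esub> c \<in> XH \<union> (\<lambda>a. inv\<^bsub>G\<^esub> a) ` XH)"

fun canon_prod :: "('a, 'b) monoid_scheme \<Rightarrow> (nat \<Rightarrow> 'a) \<Rightarrow> nat \<Rightarrow> 'a" where
  "canon_prod G c 0 = \<one>\<^bsub>G\<^esub>"
| "canon_prod G c (Suc k) = c (Suc k) \<otimes>\<^bsub>G\<^esub> canon_prod G c k"

text \<open>Adjacency in the coset leader graph w.r.t. generating set X:
  edge labelled a from u to v iff u = a v with a \<in> X; adjacent = edge in either direction.\<close>
definition cl_adjacent :: "('a, 'b) monoid_scheme \<Rightarrow> 'a set \<Rightarrow> 'a \<Rightarrow> 'a \<Rightarrow> bool" where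
  "cl_adjacent G S u v \<longleftrightarrow> (\<exists>a\<in>S. u = a \<otimes>\<^bsub>G\<^esub> v \<or> v = a \<otimes>\<^bsub>G\<^esub> u)"

end

theory Submission
  imports Defs
begin

text \<open>
  Induction along the chain. Write g = c_k ... c_1 in G_k and let b be a generator of G_k or
  the inverse of one. By the Error Control Property either b c_k is again a coset leader, and then
  only the top leader changes, to a neighbour in the coset leader graph; or b' = c_k^-1 b c_k is
  a generator of G_(k-1) or the inverse of one, and b g = c_k (b' c_(k-1) ... c_1), where the
  bracket is handled by induction. Uniqueness of canonical forms identifies the form so
  constructed with the given one.
\<close>

definition single_adjacent_change ::
    "('a, 'b) monoid_scheme \<Rightarrow> (nat \<Rightarrow> 'a set) \<Rightarrow> nat \<Rightarrow> (nat \<Rightarrow> 'a) \<Rightarrow> (nat \<Rightarrow> 'a) \<Rightarrow> bool"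
  where "single_adjacent_change G Xs k c e \<longleftrightarrow>
    (\<exists>j. \<forall>i\<in>{1..k}. i \<noteq> j \<longrightarrow> e i = c i) \<and>
    (\<forall>j\<in>{1..k}. e j \<noteq> c j \<longrightarrow> cl_adjacent G (Xs j) (c j) (e j))"

lemma single_adjacent_change_refl: "single_adjacent_change G Xs k c c"
  by (simp add: single_adjacent_change_def)

lemma canon_prod_cong:
  "(\<And>i. i \<in> {1..k} \<Longrightarrow> c i = d i) \<Longrightarrow> canon_prod G c k = canon_prod G d k"
  by (induction k) auto

lemma canon_prod_in_subgroup:
  assumes "subgroup H G" "\<And>i. i \<in> {1..k} \<Longrightarrow> c i \<in> H"
  shows "canon_prod G c k \<in> H"
  using assms(2) by (induction k) (auto intro: subgroup.one_closed subgroup.m_closed assms(1))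

lemma (in group) cl_adjacent_mult:
  assumes "S \<subseteq> carrier G" "b \<in> S \<union> (\<lambda>a. inv a) ` S" "c \<in> carrier G"
  shows "cl_adjacent G S c (b \<otimes> c)"
  using assms(2)
proof
  assume "b \<in> (\<lambda>a. inv a) ` S"
  then obtain a where a: "a \<in> S" "b = inv a" by auto
  with assms(1,3) have "c = a \<otimes> (b \<otimes> c)"
    by (auto simp: m_assoc[symmetric])
  with a(1) show ?thesis unfolding cl_adjacent_def by blast
qed (auto simp: cl_adjacent_def)

locale coset_leader_chain = group G for G (structure) +
  fixes m :: nat and Gs CL :: "nat \<Rightarrow> 'a set"
  assumes subgroup_Gs: "k \<le> m \<Longrightarrow> subgroup (Gs k) G"
    and Gs_step: "Suc k \<le> m \<Longrightarrow> Gs k \<subseteq> Gs (Suc k)"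
    and coset_leaders_CL: "Suc k \<le> m \<Longrightarrow> coset_leaders G (Gs (Suc k)) (Gs k) (CL (Suc k))"
begin

lemma Gs_mono: "i \<le> k \<Longrightarrow> k \<le> m \<Longrightarrow> Gs i \<subseteq> Gs k"
  by (induction k rule: dec_induct) (use Gs_step in auto)

lemma Gs_carrier: "k \<le> m \<Longrightarrow> Gs k \<subseteq> carrier G"
  using subgroup_Gs subgroup.subset by blast

lemma CL_subset: "k \<in> {1..m} \<Longrightarrow> CL k \<subseteq> Gs k"
  using coset_leaders_CL[of "k - 1"] by (auto simp: coset_leaders_def)

lemma CL_carrier: "k \<in> {1..m} \<Longrightarrow> CL k \<subseteq> carrier G"
  using CL_subset Gs_carrier by fastforce

lemma canon_prod_in_Gs:
  assumes "k \<le> m" "\<And>i. i \<in> {1..k} \<Longrightarrow> d i \<in> CL i"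
  shows "canon_prod G d k \<in> Gs k"
proof (rule canon_prod_in_subgroup[OF subgroup_Gs[OF assms(1)]])
  fix i assume "i \<in> {1..k}"
  with assms show "d i \<in> Gs k"
    using CL_subset[of i] Gs_mono[of i k] by auto
qed

lemma canon_prod_carrier:
  "k \<le> m \<Longrightarrow> (\<And>i. i \<in> {1..k} \<Longrightarrow> d i \<in> CL i) \<Longrightarrow> canon_prod G d k \<in> carrier G"
  using canon_prod_in_Gs Gs_carrier by blast

lemma canon_prod_unique:
  assumes "k \<le> m" "\<And>i. i \<in> {1..k} \<Longrightarrow> d i \<in> CL i" "\<And>i. i \<in> {1..k} \<Longrightarrow> d' i \<in> CL i"
    and "canon_prod G d k = canon_prod G d' k"
  shows "\<forall>i\<in>{1..k}. d i = d' i"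
  using assms
proof (induction k)
  case (Suc k)
  let ?x = "canon_prod G d (Suc k)"
  let ?p = "canon_prod G d k" and ?p' = "canon_prod G d' k"
  have leaders: "d (Suc k) \<in> CL (Suc k)" "d' (Suc k) \<in> CL (Suc k)"
    using Suc.prems(2,3) by auto
  have tails: "?p \<in> Gs k" "?p' \<in> Gs k"
    using canon_prod_in_Gs Suc.prems(1-3) by auto
  have "?x \<in> d (Suc k) <# Gs k"
    using tails(1) unfolding l_coset_def by auto
  moreover have "?x \<in> d' (Suc k) <# Gs k"
    using tails(2) Suc.prems(4) unfolding l_coset_def by auto
  moreover have "\<exists>!c. c \<in> CL (Suc k) \<and> ?x \<in> c <# Gs k"
    using coset_leaders_CL[OF Suc.prems(1)] canon_prod_in_Gs[OF Suc.prems(1,2)]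
    unfolding coset_leaders_def by blast
  ultimately have top: "d (Suc k) = d' (Suc k)"
    using leaders by blast
  have "d (Suc k) \<in> carrier G" "?p \<in> carrier G" "?p' \<in> carrier G"
    using leaders CL_carrier[of "Suc k"] tails Gs_carrier[of k] Suc.prems(1) by auto
  moreover have "d (Suc k) \<otimes> ?p = d (Suc k) \<otimes> ?p'"
    using Suc.prems(4) top by simp
  ultimately have "?p = ?p'"
    using l_cancel by blast
  then have "\<forall>i\<in>{1..k}. d i = d' i"
    using Suc.IH Suc.prems(1-3) by simp
  with top show ?case
    by (auto simp: le_Suc_eq)
qed simp

end

locale error_control_chain = coset_leader_chain +
  fixes Xs :: "nat \<Rightarrow> 'a set"
  assumes Gs_0: "Gs 0 = {\<one>}"
    and Xs_subset: "k \<le> m \<Longrightarrow> Xs k \<subseteq> Gs k"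
    and error_control_CL: "Suc k \<le> m \<Longrightarrow> error_control G (Xs k) (Xs (Suc k)) (CL (Suc k))"
begin

lemma Xs_carrier: "k \<le> m \<Longrightarrow> Xs k \<subseteq> carrier G"
  using Xs_subset Gs_carrier by blast

lemma top_leader_absorbs:
  assumes "Suc k \<le> m" "\<And>i. i \<in> {1..Suc k} \<Longrightarrow> c i \<in> CL i"
    and b: "b \<in> Xs (Suc k) \<union> (\<lambda>a. inv a) ` Xs (Suc k)" and leader: "b \<otimes> c (Suc k) \<in> CL (Suc k)"
  defines "e \<equiv> c(Suc k := b \<otimes> c (Suc k))"
  shows "(\<forall>i\<in>{1..Suc k}. e i \<in> CL i) \<and> b \<otimes> canon_prod G c (Suc k) = canon_prod G e (Suc k)
    \<and> single_adjacent_change G Xs (Suc k) c e"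
proof -
  have carr: "b \<in> carrier G" "c (Suc k) \<in> carrier G" "canon_prod G c k \<in> carrier G"
    using b Xs_carrier[OF assms(1)] CL_carrier[of "Suc k"] assms(1,2) canon_prod_carrier[of k c]
    by auto
  have "canon_prod G e k = canon_prod G c k"
    by (rule canon_prod_cong) (simp add: e_def)
  then have "canon_prod G e (Suc k) = b \<otimes> canon_prod G c (Suc k)"
    using carr by (simp add: e_def m_assoc)
  moreover have "cl_adjacent G (Xs (Suc k)) (c (Suc k)) (e (Suc k))"
    using cl_adjacent_mult[OF Xs_carrier[OF assms(1)] b carr(2)] by (simp add: e_def)
  ultimately show ?thesis
    using assms(2) leader unfolding single_adjacent_change_def
    by (auto simp: e_def intro: exI[of _ "Suc k"])
qed

lemma conjugate_passes_down:
  assumes "Suc k \<le> m" "\<And>i. i \<in> {1..Suc k} \<Longrightarrow> c i \<in> CL i"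
    and "b \<in> carrier G"
    and e: "\<And>i. i \<in> {1..k} \<Longrightarrow> e i \<in> CL i"
      "(inv c (Suc k) \<otimes> b \<otimes> c (Suc k)) \<otimes> canon_prod G c k = canon_prod G e k"
      "single_adjacent_change G Xs k c e"
  defines "e' \<equiv> e(Suc k := c (Suc k))"
  shows "(\<forall>i\<in>{1..Suc k}. e' i \<in> CL i) \<and> b \<otimes> canon_prod G c (Suc k) = canon_prod G e' (Suc k)
    \<and> single_adjacent_change G Xs (Suc k) c e'"
proof -
  have carr: "c (Suc k) \<in> carrier G" "canon_prod G c k \<in> carrier G"
    using CL_carrier[of "Suc k"] assms(1,2) canon_prod_carrier[of k c] by auto
  have "canon_prod G e' k = canon_prod G e k"
    by (rule canon_prod_cong) (simp add: e'_def)
  then have "canon_prod G e' (Suc k)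
      = c (Suc k) \<otimes> ((inv c (Suc k) \<otimes> b \<otimes> c (Suc k)) \<otimes> canon_prod G c k)"
    using e(2) by (simp add: e'_def)
  also have "\<dots> = b \<otimes> canon_prod G c (Suc k)"
    using carr assms(3) by (simp add: m_assoc[symmetric])
  finally have "b \<otimes> canon_prod G c (Suc k) = canon_prod G e' (Suc k)"
    by (rule sym)
  moreover have "\<forall>i\<in>{1..Suc k}. e' i \<in> CL i"
    using e(1) assms(2) by (simp add: e'_def)
  moreover have "single_adjacent_change G Xs (Suc k) c e'"
  proof -
    obtain j where "\<forall>i\<in>{1..k}. i \<noteq> j \<longrightarrow> e i = c i"
      using e(3) unfolding single_adjacent_change_def by blast
    then have "\<forall>i\<in>{1..Suc k}. i \<noteq> j \<longrightarrow> e' i = c i"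
      by (simp add: e'_def)
    moreover have "\<forall>i\<in>{1..Suc k}. e' i \<noteq> c i \<longrightarrow> cl_adjacent G (Xs i) (c i) (e' i)"
      using e(3) unfolding single_adjacent_change_def by (simp add: e'_def)
    ultimately show ?thesis
      unfolding single_adjacent_change_def by blast
  qed
  ultimately show ?thesis
    by blast
qed

lemma canon_form_mult_generator:
  assumes "k \<le> m" "\<And>i. i \<in> {1..k} \<Longrightarrow> c i \<in> CL i" "b \<in> Xs k \<union> (\<lambda>a. inv a) ` Xs k"
  shows "\<exists>e. (\<forall>i\<in>{1..k}. e i \<in> CL i) \<and> b \<otimes> canon_prod G c k = canon_prod G e k
    \<and> single_adjacent_change G Xs k c e"
  using assms
proof (induction k arbitrary: b)
  case 0
  then have "b = \<one>"
    using Xs_subset[of 0] Gs_0 by auto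
  then show ?case
    by (auto intro: single_adjacent_change_refl)
next
  case (Suc k)
  show ?case
  proof (cases "b \<otimes> c (Suc k) \<in> CL (Suc k)")
    case True
    show ?thesis
      using top_leader_absorbs[OF Suc.prems True] by blast
  next
    case False
    have "c (Suc k) \<in> CL (Suc k)"
      using Suc.prems(2) by simp
    then have "b \<otimes> c (Suc k) \<in> CL (Suc k) \<or>
        inv c (Suc k) \<otimes> b \<otimes> c (Suc k) \<in> Xs k \<union> (\<lambda>a. inv a) ` Xs k"
      using error_control_CL[OF Suc.prems(1), unfolded error_control_def] Suc.prems(3)
      by blast
    with False have "inv c (Suc k) \<otimes> b \<otimes> c (Suc k) \<in> Xs k \<union> (\<lambda>a. inv a) ` Xs k"
      by simp
    then obtain e where e: "\<forall>i\<in>{1..k}. e i \<in> CL i"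
      "(inv c (Suc k) \<otimes> b \<otimes> c (Suc k)) \<otimes> canon_prod G c k = canon_prod G e k"
      "single_adjacent_change G Xs k c e"
      using Suc.IH Suc.prems(1,2) by (metis Suc_leD atLeastAtMost_iff le_SucI)
    have "b \<in> carrier G"
      using Suc.prems(1,3) Xs_carrier by blast
    then show ?thesis
      using conjugate_passes_down[OF Suc.prems(1,2) _ e(1)[rule_format] e(2,3)] by blast
  qed
qed

end

theorem mainTheorem7:
  fixes G (structure)
    and m :: nat
    and Gs :: "nat \<Rightarrow> 'a set"
    and Xs :: "nat \<Rightarrow> 'a set"
    and CL :: "nat \<Rightarrow> 'a set"
    and c c' :: "nat \<Rightarrow> 'a"
    and g b :: 'a
  assumes "group G"
    and "finite (carrier G)"
    and "Gs 0 = {\<one>}"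
    and "Gs m = carrier G"
    and "\<And>k. k \<le> m \<Longrightarrow> subgroup (Gs k) G"
    and "\<And>k. 1 \<le> k \<Longrightarrow> k \<le> m \<Longrightarrow> Gs (k - 1) \<subset> Gs k"
    and "\<And>k. k \<le> m \<Longrightarrow> Xs k \<subseteq> Gs k \<and> generate G (Xs k) = Gs k"
    and "\<And>k. 1 \<le> k \<Longrightarrow> k \<le> m \<Longrightarrow> coset_leaders G (Gs k) (Gs (k - 1)) (CL k)"
    and "\<And>k. 1 \<le> k \<Longrightarrow> k \<le> m \<Longrightarrow> error_control G (Xs (k - 1)) (Xs k) (CL k)"
    and "g \<in> carrier G"
    and "\<And>k. 1 \<le> k \<Longrightarrow> k \<le> m \<Longrightarrow> c k \<in> CL k"
    and "g = canon_prod G c m"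
    and "b \<in> Xs m \<union> (\<lambda>a. inv a) ` Xs m"
    and "\<And>k. 1 \<le> k \<Longrightarrow> k \<le> m \<Longrightarrow> c' k \<in> CL k"
    and "b \<otimes> g = canon_prod G c' m"
  shows "(\<exists>j. \<forall>i\<in>{1..m}. i \<noteq> j \<longrightarrow> c' i = c i) \<and>
         (\<forall>j\<in>{1..m}. c' j \<noteq> c j \<longrightarrow> cl_adjacent G (Xs j) (c j) (c' j))"
proof -
  interpret error_control_chain G m Gs CL Xs
  proof (intro error_control_chain.intro coset_leader_chain.intro
      coset_leader_chain_axioms.intro error_control_chain_axioms.intro)
    fix k assume "Suc k \<le> m"
    then show "Gs k \<subseteq> Gs (Suc k)"
      "coset_leaders G (Gs (Suc k)) (Gs k) (CL (Suc k))"
      "error_control G (Xs k) (Xs (Suc k)) (CL (Suc k))"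
      using assms(6,8,9)[of "Suc k"] by auto
  qed (use assms(1,3,5,7) in auto)
  obtain e where e: "\<forall>i\<in>{1..m}. e i \<in> CL i" "b \<otimes> canon_prod G c m = canon_prod G e m"
      "single_adjacent_change G Xs m c e"
    using canon_form_mult_generator[of m c b] assms(11,13) by auto
  have "\<forall>i\<in>{1..m}. c' i = e i"
    using canon_prod_unique[of m c' e] assms(12,14,15) e(1,2) by auto
  with e(3) show ?thesis
    unfolding single_adjacent_change_def by auto
qed

end
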